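(* Let $p$ be a prime and let $G$ be a finite Abelian $p$-group. Let $S$ be a normal sequence over $G$ with $|S|=\mathsf{D}(G)+i-1$, where $i\in\{1,2,\dots,p-1\}$. Then $S=0^iT$, i.e. $S$ consists of $i$ copies of the zero element $0\in G$ together with a sequence $T$ over $G$ that is zero-sumfree.
   Context: A sequence over a finite Abelian group $G$ (written additively) is a finite multiset of elements of $G$ (repetitions allowed, order disregarded); its length $|S|$ is the number of terms counted with multiplicity, and a subsequence is a sub-multiset. For $S=g_1\cdots g_\ell$, $\sigma(S)=\sum_i g_i$. $S$ is a zero-sum sequence if $\sigma(S)=0$; $S$ is zero-sumfree if no non-empty subsequence has sum $0$. The Davenport constant $\mathsf{D}(G)$ is the smallest positive integer $t$ such that every sequence over $G$ of length at least $t$ contains a non-empty zero-sum subsequence. A sequence $S$ over $G$ with $|S|\ge \mathsf{D}(G)$ is called normal if every zero-sum subsequence $S'$ of $S$ satisfies $|S'|\le |S|-\mathsf{D}(G)+1$. The notation $0^iT$ denotes the sequence obtained from $T$ by adjoining $i$ copies of $0$. *)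

theory Defs
  imports Main "HOL-Library.Multiset" "HOL-Computational_Algebra.Primes"
begin

text \<open>Sequences over an additive abelian group 'g are finite multisets of elements of 'g.\<close>

definition zero_sum :: "'g::comm_monoid_add multiset \<Rightarrow> bool" where
  "zero_sum S \<longleftrightarrow> sum_mset S = 0"

definition zero_sumfree :: "'g::comm_monoid_add multiset \<Rightarrow> bool" where
  "zero_sumfree S \<longleftrightarrow> (\<forall>S'. S' \<subseteq># S \<and> S' \<noteq> {#} \<longrightarrow> sum_mset S' \<noteq> 0)"

definition davenport :: "'g::{ab_group_add,finite} itself \<Rightarrow> nat" where
  "davenport _ = (LEAST t. 0 < t \<and>
      (\<forall>S :: 'g multiset. t \<le> size S \<longrightarrow>
         (\<exists>S'. S' \<subseteq># S \<and> S' \<noteq> {#} \<and> sum_mset S' = 0)))"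

definition normal_seq :: "'g::{ab_group_add,finite} multiset \<Rightarrow> bool" where
  "normal_seq S \<longleftrightarrow> davenport TYPE('g) \<le> size S \<and>
     (\<forall>S'. S' \<subseteq># S \<and> zero_sum S' \<longrightarrow> size S' \<le> size S - davenport TYPE('g) + 1)"

end

theory Submission
  imports Defs "HOL-Library.Poly_Mapping" "HOL-Library.Set_Algebras"
begin

text \<open>
  Olson: if \<open>G\<close> is a \<open>p\<close>-group, then in \<open>\<bbbF>\<^sub>p[G]\<close> every product of at least \<open>D(G)\<close>
  factors \<open>1 - X\<^sup>g\<close> vanishes. Splitting off a cyclic subgroup of maximal order and inducting gives
  a length \<open>M\<close> for which this holds together with a zero-sumfree sequence of length \<open>M - 1\<close>,
  so \<open>M = D(G)\<close>. Reading off coefficients: for every family of at least \<open>D(G)\<close> elements and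
  every \<open>x\<close>, the number of subfamilies with sum \<open>x\<close>, counted with sign \<open>(-1)\<^sup>|\<^sup>T\<^sup>|\<close>, is
  divisible by \<open>p\<close>.

  Let \<open>S\<close> be normal with \<open>z < i\<close> zeros. Its nonzero part has length \<open>D(G) + m - 1\<close>,
  \<open>m = i - z\<close>, and all its zero-sum subfamilies have at most \<open>m\<close> terms. For \<open>|E| < m\<close>,
  inclusion-exclusion over the supersets of \<open>E\<close> (each reducing to a signed count over at least
  \<open>D(G)\<close> indices) shows that the number \<open>N(E)\<close> of zero-sum \<open>m\<close>-subfamilies containing \<open>E\<close>
  is congruent to \<open>[\<sigma>(E) = 0]\<close> modulo \<open>p\<close>. Hence \<open>N(\<emptyset>) \<equiv> 1\<close>, while
  \<open>m N(\<emptyset>) = \<Sum>\<^sub>e N({e}) \<equiv> 0\<close>, impossible for \<open>0 < m < p\<close>. So \<open>z = i\<close>, and normality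
  makes the remaining terms zero-sumfree.
\<close>

section \<open>Multiples and additive orders\<close>

fun nsmul :: "nat \<Rightarrow> 'g::monoid_add \<Rightarrow> 'g" where
  "nsmul 0 g = 0"
| "nsmul (Suc n) g = g + nsmul n g"

lemma nsmul_add: "nsmul (m + n) g = nsmul m g + nsmul n g"
  by (induction m) (auto simp: add.assoc)

lemma nsmul_mult: "nsmul (m * n) g = nsmul m (nsmul n g)"
  by (induction m) (auto simp: nsmul_add)

lemma nsmul_zero [simp]: "nsmul n (0::'g::monoid_add) = 0"
  by (induction n) auto

lemma nsmul_plus: "nsmul n (g + h) = nsmul n g + nsmul n (h::'g::comm_monoid_add)"
  by (induction n) (auto simp: algebra_simps)

lemma nsmul_minus: "nsmul n (- g) = - nsmul n (g::'g::ab_group_add)"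
  by (induction n) (auto simp: algebra_simps)

lemma nsmul_diff: "nsmul n (g - h) = nsmul n g - nsmul n (h::'g::ab_group_add)"
  using nsmul_plus[of n g "- h"] by (simp add: nsmul_minus)

lemma sum_constant_nsmul: "finite A \<Longrightarrow> (\<Sum>x\<in>A. g) = nsmul (card A) g"
  by (induction A rule: finite_induct) auto

lemma sum_mset_replicate_mset_nsmul: "sum_mset (replicate_mset n g) = nsmul n g"
  by (induction n) auto

lemma nsmul_card_UNIV: "nsmul (card (UNIV :: 'g set)) (g::'g::{ab_group_add,finite}) = 0"
proof -
  have "(\<Sum>x\<in>UNIV. x + g) = (\<Sum>x\<in>(UNIV::'g set). x)"
    by (rule sum.reindex_bij_witness[of _ "\<lambda>x. x - g" "\<lambda>x. x + g"]) auto
  then show ?thesis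
    by (simp add: sum.distrib sum_constant_nsmul)
qed

definition add_order :: "'g::{ab_group_add,finite} \<Rightarrow> nat" where
  "add_order g = (LEAST n. 0 < n \<and> nsmul n g = 0)"

lemma
  fixes g :: "'g::{ab_group_add,finite}"
  shows add_order_pos: "0 < add_order g" and nsmul_add_order: "nsmul (add_order g) g = 0"
proof -
  have "0 < card (UNIV :: 'g set)" by (simp add: finite_UNIV_card_ge_0)
  then have "\<exists>n. 0 < n \<and> nsmul n g = 0" using nsmul_card_UNIV[of g] by blast
  from LeastI_ex[OF this] show "0 < add_order g" "nsmul (add_order g) g = 0"
    unfolding add_order_def by simp_all
qed

lemma nsmul_mod_add_order: "nsmul (n mod add_order g) g = nsmul n g"
proof -
  have "nsmul n g = nsmul (n div add_order g * add_order g) g + nsmul (n mod add_order g) g"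
    by (simp flip: nsmul_add)
  then show ?thesis by (simp add: nsmul_mult nsmul_add_order)
qed

lemma add_order_le: "0 < n \<Longrightarrow> nsmul n g = 0 \<Longrightarrow> add_order g \<le> n"
  unfolding add_order_def by (rule Least_le) simp

lemma nsmul_eq_0_iff: "nsmul n g = 0 \<longleftrightarrow> add_order g dvd n"
proof
  assume "add_order g dvd n"
  then obtain k where "n = k * add_order g" by (metis dvd_def mult.commute)
  then show "nsmul n g = 0" by (simp add: nsmul_mult nsmul_add_order)
next
  assume "nsmul n g = 0"
  then have "nsmul (n mod add_order g) g = 0" by (simp add: nsmul_mod_add_order)
  moreover have "n mod add_order g < add_order g" using add_order_pos[of g] by simp
  ultimately have "n mod add_order g = 0" using add_order_le[of "n mod add_order g" g] by linarith
  then show "add_order g dvd n" by (simp add: mod_eq_0_iff_dvd)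
qed

lemma add_order_eq_1_iff: "add_order g = 1 \<longleftrightarrow> g = 0"
proof -
  have "add_order g dvd 1 \<longleftrightarrow> g = 0" using nsmul_eq_0_iff[of 1 g] by simp
  then show ?thesis by simp
qed

lemma add_order_prime_power:
  assumes "prime p" "card (UNIV :: 'g::{ab_group_add,finite} set) = p ^ k"
  shows "\<exists>e. add_order (g::'g) = p ^ e"
proof -
  have "add_order g dvd p ^ k" using nsmul_card_UNIV[of g] assms(2) by (simp add: nsmul_eq_0_iff)
  then show ?thesis using divides_primepow_nat[OF assms(1)] by blast
qed

lemma minus_eq_nsmul: "- g = nsmul (add_order g - 1) g"
proof -
  have "g + nsmul (add_order g - 1) g = nsmul (Suc (add_order g - 1)) g" by simp
  also have "\<dots> = 0" using add_order_pos[of g] by (simp add: nsmul_add_order)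
  finally show ?thesis by (rule minus_unique)
qed

section \<open>A cyclic subgroup of maximal order has a complement\<close>

definition add_subgroup :: "'g::ab_group_add set \<Rightarrow> bool" where
  "add_subgroup H \<longleftrightarrow> 0 \<in> H \<and> (\<forall>x\<in>H. \<forall>y\<in>H. x + y \<in> H) \<and> (\<forall>x\<in>H. - x \<in> H)"

lemma add_subgroup_zero: "add_subgroup H \<Longrightarrow> 0 \<in> H"
  and add_subgroup_add: "add_subgroup H \<Longrightarrow> x \<in> H \<Longrightarrow> y \<in> H \<Longrightarrow> x + y \<in> H"
  and add_subgroup_minus: "add_subgroup H \<Longrightarrow> x \<in> H \<Longrightarrow> - x \<in> H"
  by (simp_all add: add_subgroup_def)

lemma add_subgroup_diff: "add_subgroup H \<Longrightarrow> x \<in> H \<Longrightarrow> y \<in> H \<Longrightarrow> x - y \<in> H"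
  using add_subgroup_add[of H x "- y"] add_subgroup_minus[of H y] by simp

lemma add_subgroup_nsmul: "add_subgroup H \<Longrightarrow> x \<in> H \<Longrightarrow> nsmul n x \<in> H"
  by (induction n) (auto simp: add_subgroup_zero add_subgroup_add)

lemma add_subgroup_sum_mset: "add_subgroup H \<Longrightarrow> set_mset S \<subseteq> H \<Longrightarrow> sum_mset S \<in> H"
  by (induction S) (auto simp: add_subgroup_zero add_subgroup_add)

lemma add_subgroup_set_plus:
  assumes A: "add_subgroup A" and B: "add_subgroup B"
  shows "add_subgroup (A + B)"
  unfolding add_subgroup_def
proof (intro conjI ballI)
  show "0 \<in> A + B"
    using set_plus_intro[OF add_subgroup_zero[OF A] add_subgroup_zero[OF B]] by simp
next
  fix x y assume "x \<in> A + B" "y \<in> A + B"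
  then obtain a b a' b' where "x = a + b" "y = a' + b'" "a \<in> A" "b \<in> B" "a' \<in> A" "b' \<in> B"
    by (auto elim!: set_plus_elim)
  then have "x + y = (a + a') + (b + b')" "a + a' \<in> A" "b + b' \<in> B"
    by (simp_all add: algebra_simps add_subgroup_add A B)
  then show "x + y \<in> A + B" by auto
next
  fix x assume "x \<in> A + B"
  then obtain a b where "x = a + b" "a \<in> A" "b \<in> B" by (auto elim!: set_plus_elim)
  then have "- x = - a + - b" "- a \<in> A" "- b \<in> B"
    by (simp_all add: add_subgroup_minus A B)
  then show "- x \<in> A + B" by (metis set_plus_intro)
qed

definition multiples :: "'g::monoid_add \<Rightarrow> 'g set" where
  "multiples g = range (\<lambda>n. nsmul n g)"

lemma nsmul_in_multiples [simp]: "nsmul n g \<in> multiples g"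
  by (simp add: multiples_def)

lemma zero_in_multiples [simp]: "0 \<in> multiples g"
  using nsmul_in_multiples[of 0 g] by simp

lemma in_multiples_self [simp]: "g \<in> multiples g"
  using nsmul_in_multiples[of 1 g] by simp

lemma add_subgroup_multiples: "add_subgroup (multiples (g::'g::{ab_group_add,finite}))"
  unfolding add_subgroup_def multiples_def
proof (intro conjI ballI)
  fix x y assume "x \<in> range (\<lambda>n. nsmul n g)" "y \<in> range (\<lambda>n. nsmul n g)"
  then show "x + y \<in> range (\<lambda>n. nsmul n g)" by (auto simp flip: nsmul_add)
next
  fix x assume "x \<in> range (\<lambda>n. nsmul n g)"
  then show "- x \<in> range (\<lambda>n. nsmul n g)" by (auto simp: nsmul_minus[symmetric] minus_eq_nsmul[of g] nsmul_mult[symmetric])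
qed (rule range_eqI[of _ _ 0], simp)

lemma subset_set_plus_left:
  fixes A B :: "'g::monoid_add set"
  assumes "0 \<in> B" shows "A \<subseteq> A + B"
proof
  fix a assume "a \<in> A"
  then have "a + 0 \<in> A + B" using assms by (rule set_plus_intro)
  then show "a \<in> A + B" by simp
qed

lemma subset_set_plus_right:
  fixes A B :: "'g::monoid_add set"
  assumes "0 \<in> A" shows "B \<subseteq> A + B"
proof
  fix b assume "b \<in> B"
  with assms have "0 + b \<in> A + B" by (rule set_plus_intro)
  then show "b \<in> A + B" by simp
qed

lemma multiples_subset: "add_subgroup H \<Longrightarrow> g \<in> H \<Longrightarrow> multiples g \<subseteq> H"
  by (auto simp: multiples_def add_subgroup_nsmul)

lemma set_plus_subset: "add_subgroup H \<Longrightarrow> A \<subseteq> H \<Longrightarrow> B \<subseteq> H \<Longrightarrow> A + B \<subseteq> H"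
  by (auto elim!: set_plus_elim intro: add_subgroup_add)

lemma exists_last_prime_power_outside:
  assumes "x \<notin> W" "nsmul (p ^ e) x \<in> W"
  shows "\<exists>j. nsmul (p ^ j) x \<notin> W \<and> nsmul (p ^ Suc j) x \<in> W"
  using assms(2)
proof (induction e)
  case 0
  then show ?case using assms(1) by simp
next
  case (Suc e)
  then show ?case by (cases "nsmul (p ^ e) x \<in> W") blast+
qed

lemma exists_outside_with_prime_multiple_inside:
  fixes h :: "'g::{ab_group_add,finite}"
  assumes p: "prime p" and H: "add_subgroup H" "h \<in> H" and oh: "add_order h = p ^ f"
    and exponent: "\<forall>z\<in>H. nsmul (p ^ f) z = 0"
    and K: "add_subgroup K" and hK: "multiples h \<inter> K = {0}"
    and x0: "x0 \<in> H" "x0 \<notin> multiples h + K"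
  shows "\<exists>x\<in>H. x \<notin> multiples h + K \<and> nsmul p x \<in> K"
proof -
  define W where "W = multiples h + K"
  have "0 \<in> W" unfolding W_def using set_plus_intro[OF zero_in_multiples add_subgroup_zero[OF K]] by simp
  then obtain j where j: "nsmul (p ^ j) x0 \<notin> W" "nsmul (p ^ Suc j) x0 \<in> W"
    using exists_last_prime_power_outside[of x0 W p f] x0 exponent unfolding W_def by auto
  define x where "x = nsmul (p ^ j) x0"
  have xH: "x \<in> H" and xW: "x \<notin> W" using j x0 H(1) by (simp_all add: x_def add_subgroup_nsmul)
  have "nsmul p x \<in> W" using j by (simp add: x_def flip: nsmul_mult)
  then obtain a y where pxa: "nsmul p x = nsmul a h + y" and yK: "y \<in> K"
    unfolding W_def multiples_def by (auto elim!: set_plus_elim)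
  obtain f' where f': "f = Suc f'"
  proof (cases f)
    case 0
    then have "x = 0" using exponent xH by simp
    then show ?thesis using xW \<open>0 \<in> W\<close> by simp
  qed
  have "0 = nsmul (p ^ f') (nsmul p x)"
    using exponent xH by (simp add: f' flip: nsmul_mult) (simp add: mult.commute)
  also have "\<dots> = nsmul (p ^ f' * a) h + nsmul (p ^ f') y"
    by (simp add: pxa nsmul_plus nsmul_mult)
  finally have "nsmul (p ^ f' * a) h = - nsmul (p ^ f') y"
    by (simp add: eq_neg_iff_add_eq_0)
  also have "\<dots> \<in> K" using K yK by (intro add_subgroup_minus add_subgroup_nsmul)
  finally have "nsmul (p ^ f' * a) h = 0" using hK nsmul_in_multiples by blast
  \<comment> \<open>here the maximality of the order of \<open>h\<close> enters: \<open>p\<^sup>f\<close> also kills \<open>x\<close>\<close>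
  then have "p ^ f' * p dvd p ^ f' * a" by (simp add: nsmul_eq_0_iff oh f' mult.commute)
  then obtain b where b: "a = p * b" using p by (auto simp: prime_gt_0_nat elim!: dvdE)
  define x' where "x' = x - nsmul b h"
  have "nsmul p x' = y" by (simp add: x'_def nsmul_diff pxa b nsmul_mult[symmetric] mult.commute)
  moreover have "x' \<in> H" unfolding x'_def using H xH by (intro add_subgroup_diff add_subgroup_nsmul)
  moreover have "x' \<notin> W"
  proof
    assume "x' \<in> W"
    then obtain c z where "x' = nsmul c h + z" "z \<in> K"
      unfolding W_def multiples_def by (auto elim!: set_plus_elim)
    then have "x = nsmul (c + b) h + z" by (simp add: x'_def nsmul_add algebra_simps)
    then show False using xW \<open>z \<in> K\<close> unfolding W_def by (metis nsmul_in_multiples set_plus_intro)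
  qed
  ultimately show ?thesis using yK unfolding W_def by blast
qed

lemma multiples_inter_extended_subgroup:
  fixes h x :: "'g::{ab_group_add,finite}"
  assumes p: "prime p" and K: "add_subgroup K" and hK: "multiples h \<inter> K = {0}"
    and x: "x \<notin> multiples h + K" "nsmul p x \<in> K"
  shows "multiples h \<inter> (K + multiples x) = {0}"
proof -
  have "v = 0" if v: "v \<in> multiples h" "v \<in> K + multiples x" for v
  proof -
    obtain j where vj: "v = nsmul j h" using v(1) by (auto simp: multiples_def)
    obtain y c where vy: "v = y + nsmul c x" and yK: "y \<in> K"
      using v(2) by (auto simp: multiples_def elim!: set_plus_elim)
    define r where "r = c mod p"
    define y' where "y' = y + nsmul (c div p) (nsmul p x)"
    have y'K: "y' \<in> K" unfolding y'_def using add_subgroup_add[OF K yK add_subgroup_nsmul[OF K x(2)]] .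
    have vr: "v = y' + nsmul r x"
    proof -
      have "nsmul c x = nsmul (c div p * p) x + nsmul r x"
        unfolding r_def by (simp flip: nsmul_add)
      then show ?thesis by (simp add: vy y'_def nsmul_mult add.assoc)
    qed
    show "v = 0"
    proof (cases "r = 0")
      case True
      then show ?thesis using vr y'K v(1) hK by auto
    next
      case False
      \<comment> \<open>then \<open>r\<close> is invertible modulo \<open>p\<close>, which would put \<open>x\<close> into \<open>multiples h + K\<close>\<close>
      have "r < p" using prime_gt_0_nat[OF p] by (simp add: r_def)
      then have "\<not> p dvd r" using False by (auto dest: dvd_imp_le)
      then have "gcd r p = 1"
        using prime_imp_coprime[OF p] by (metis coprime_commute coprime_iff_gcd_eq_1)
      then obtain s t where st: "r * s = p * t + 1" using bezout_nat[of r p] False by auto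
      have "nsmul (s * j) h = nsmul s v" by (simp add: vj nsmul_mult)
      also have "\<dots> = nsmul s y' + nsmul (r * s) x"
        by (simp add: vr nsmul_plus nsmul_mult[symmetric] mult.commute)
      also have "nsmul (r * s) x = nsmul t (nsmul p x) + x"
        by (simp add: st nsmul_add nsmul_mult[symmetric] mult.commute)
      finally have "x = nsmul (s * j) h + - (nsmul s y' + nsmul t (nsmul p x))"
        by (simp add: algebra_simps)
      moreover have "- (nsmul s y' + nsmul t (nsmul p x)) \<in> K"
        using K add_subgroup_nsmul[OF K y'K] add_subgroup_nsmul[OF K x(2)]
        by (intro add_subgroup_minus add_subgroup_add)
      ultimately have "x \<in> multiples h + K" by (metis nsmul_in_multiples set_plus_intro)
      then show ?thesis using x(1) by simp
    qed
  qed
  moreover have "0 \<in> K + multiples x"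
    using set_plus_intro[OF add_subgroup_zero[OF K] zero_in_multiples] by simp
  ultimately show ?thesis by auto
qed

lemma maximal_order_multiples_complement:
  fixes h :: "'g::{ab_group_add,finite}"
  assumes p: "prime p" and H: "add_subgroup H" "h \<in> H" and oh: "add_order h = p ^ f"
    and exponent: "\<forall>z\<in>H. nsmul (p ^ f) z = 0"
  obtains K where "add_subgroup K" "K \<subseteq> H" "multiples h \<inter> K = {0}" "H \<subseteq> multiples h + K"
proof -
  \<comment> \<open>a largest subgroup meeting \<open>multiples h\<close> trivially is a complement\<close>
  define P where "P K \<longleftrightarrow> add_subgroup K \<and> K \<subseteq> H \<and> multiples h \<inter> K = {0}" for K
  have "add_subgroup {0::'g}" by (simp add: add_subgroup_def)
  then have "P {0}" using add_subgroup_zero[OF H(1)] by (auto simp: P_def)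
  moreover have "\<forall>K. P K \<longrightarrow> card K < Suc (card (UNIV :: 'g set))"
    by (simp add: less_Suc_eq_le card_mono)
  ultimately obtain K where PK: "P K" and Kmax: "\<And>K'. P K' \<Longrightarrow> card K' \<le> card K"
    using ex_has_greatest_nat[of P "{0}" card] by blast
  then have K: "add_subgroup K" "K \<subseteq> H" "multiples h \<inter> K = {0}" by (simp_all add: P_def)
  have "H \<subseteq> multiples h + K"
  proof
    fix x0 assume "x0 \<in> H"
    show "x0 \<in> multiples h + K"
    proof (rule ccontr)
      assume "x0 \<notin> multiples h + K"
      then obtain x where x: "x \<in> H" "x \<notin> multiples h + K" "nsmul p x \<in> K"
        using exists_outside_with_prime_multiple_inside[OF p H oh exponent K(1,3) \<open>x0 \<in> H\<close>]
        by blast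
      have "P (K + multiples x)"
        unfolding P_def
        using add_subgroup_set_plus[OF K(1) add_subgroup_multiples]
          set_plus_subset[OF H(1) K(2) multiples_subset[OF H(1) x(1)]]
          multiples_inter_extended_subgroup[OF p K(1) K(3) x(2,3)] by blast
      moreover have "K \<subset> K + multiples x"
      proof -
        have "x \<in> K + multiples x"
          using set_plus_intro[OF add_subgroup_zero[OF K(1)] in_multiples_self, of x] by simp
        moreover have "x \<notin> K" using x(2) subset_set_plus_right[OF zero_in_multiples, of K h] by blast
        ultimately show ?thesis using subset_set_plus_left[OF zero_in_multiples, of K x] by blast
      qed
      then have "card K < card (K + multiples x)" by (simp add: psubset_card_mono)
      ultimately show False using Kmax by fastforce
    qed
  qed
  with K show ?thesis using that by blast
qed

section \<open>Congruences modulo a prime\<close>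

lemma of_nat_dvd_of_nat: "m dvd n \<Longrightarrow> (of_nat m :: 'a::comm_semiring_1) dvd of_nat n"
  by (metis dvdE dvd_triv_left of_nat_mult)

lemma prime_dvd_add_power_sub:
  fixes a b :: "'a::comm_ring_1"
  assumes p: "prime p"
  shows "of_nat p dvd (a + b) ^ p - a ^ p - b ^ p"
proof -
  define t where "t k = of_nat (p choose k) * a ^ k * b ^ (p - k)" for k
  have "{..p} = insert p (insert 0 {1..<p})" using prime_gt_0_nat[OF p] by auto
  then have "(a + b) ^ p = (\<Sum>k\<in>insert p (insert 0 {1..<p}). t k)"
    unfolding binomial_ring t_def by simp
  also have "\<dots> = t p + t 0 + (\<Sum>k\<in>{1..<p}. t k)"
    using prime_gt_0_nat[OF p] by (simp add: add.assoc)
  finally have "(a + b) ^ p = t p + t 0 + (\<Sum>k\<in>{1..<p}. t k)" .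
  moreover have "of_nat p dvd (\<Sum>k\<in>{1..<p}. t k)"
    unfolding t_def using p
    by (intro dvd_sum dvd_mult2 of_nat_dvd_of_nat dvd_choose_prime) auto
  ultimately show ?thesis by (simp add: t_def)
qed

lemma prime_dvd_diff_power_sub:
  fixes a b :: "'a::comm_ring_1"
  assumes p: "prime p"
  shows "of_nat p dvd (a - b) ^ p - (a ^ p - b ^ p)"
proof -
  have "of_nat p dvd (- b) ^ p + b ^ p"
  proof (cases "p = 2")
    case True
    then show ?thesis by (simp flip: mult_2)
  next
    case False
    then have "odd p" using p prime_odd_nat prime_ge_2_nat by (metis le_neq_implies_less)
    then show ?thesis by simp
  qed
  then have "of_nat p dvd ((a + - b) ^ p - a ^ p - (- b) ^ p) + ((- b) ^ p + b ^ p)"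
    using prime_dvd_add_power_sub[OF p, of a "- b"] by (rule dvd_add[rotated])
  then show ?thesis by (simp add: algebra_simps)
qed

lemma prime_dvd_diff_prime_power_sub:
  fixes a b :: "'a::comm_ring_1"
  assumes p: "prime p"
  shows "of_nat p dvd (a - b) ^ (p ^ e) - (a ^ (p ^ e) - b ^ (p ^ e))"
proof (induction e)
  case 0
  then show ?case by simp
next
  case (Suc e)
  define c where "c = a ^ (p ^ e) - b ^ (p ^ e)"
  have "((a - b) ^ p ^ e - c) dvd ((a - b) ^ p ^ e) ^ p - c ^ p"
    unfolding power_diff_sumr2[of "(a - b) ^ p ^ e"] by simp
  then have "of_nat p dvd ((a - b) ^ p ^ e) ^ p - c ^ p"
    using Suc.IH unfolding c_def by (rule dvd_trans[rotated])
  moreover have "of_nat p dvd c ^ p - ((a ^ p ^ e) ^ p - (b ^ p ^ e) ^ p)"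
    unfolding c_def by (rule prime_dvd_diff_power_sub[OF p])
  ultimately have "of_nat p dvd (((a - b) ^ p ^ e) ^ p - c ^ p) + (c ^ p - ((a ^ p ^ e) ^ p - (b ^ p ^ e) ^ p))"
    by (rule dvd_add)
  also have "\<dots> = (a - b) ^ p ^ Suc e - (a ^ p ^ Suc e - b ^ p ^ Suc e)"
    by (simp add: power_mult[symmetric] mult.commute)
  finally show ?case .
qed

lemma dvd_prod_mset_of_decomposition:
  fixes \<phi> :: "'b \<Rightarrow> 'a::comm_ring_1"
  assumes u: "d dvd u ^ q"
    and B: "\<And>T. set_mset T \<subseteq> B \<Longrightarrow> m \<le> size T \<Longrightarrow> d dvd (\<Prod>b\<in>#T. \<phi> b)"
    and A: "\<And>a. a \<in> A \<Longrightarrow> \<exists>c e b. b \<in> B \<and> \<phi> a = u * c + e * \<phi> b"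
    and S: "set_mset S \<subseteq> A" "q + m \<le> size S + 1"
  shows "d dvd (\<Prod>a\<in>#S. \<phi> a)"
proof -
  \<comment> \<open>expanding, each term has a factor \<open>u\<^sup>q\<close> or at least \<open>m\<close> factors \<open>\<phi> b\<close> with \<open>b \<in> B\<close>\<close>
  have "d dvd u ^ i * (\<Prod>b\<in>#T. \<phi> b) * (\<Prod>a\<in>#S. \<phi> a)"
    if "set_mset S \<subseteq> A" "set_mset T \<subseteq> B" "q + m \<le> i + size T + size S + 1" for i T
    using that
  proof (induction S arbitrary: i T)
    case empty
    show ?case
    proof (cases "q \<le> i")
      case True
      then have "u ^ q dvd u ^ i" by (rule le_imp_power_dvd)
      then show ?thesis using u by (simp add: dvd_mult2 dvd_trans)
    next
      case False
      then show ?thesis using B[of T] empty by (simp add: dvd_mult)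
    qed
  next
    case (add a S)
    have "a \<in> A" using add.prems(1) by simp
    then obtain c e b where b: "b \<in> B" and a: "\<phi> a = u * c + e * \<phi> b"
      using A by blast
    have "u ^ i * (\<Prod>b\<in>#T. \<phi> b) * (\<Prod>a\<in>#add_mset a S. \<phi> a)
        = c * (u ^ Suc i * (\<Prod>b\<in>#T. \<phi> b) * (\<Prod>a\<in>#S. \<phi> a))
          + e * (u ^ i * (\<Prod>b\<in>#add_mset b T. \<phi> b) * (\<Prod>a\<in>#S. \<phi> a))"
      by (simp add: a algebra_simps)
    moreover have "d dvd u ^ Suc i * (\<Prod>b\<in>#T. \<phi> b) * (\<Prod>a\<in>#S. \<phi> a)"
      using add by (intro add.IH) auto
    moreover have "d dvd u ^ i * (\<Prod>b\<in>#add_mset b T. \<phi> b) * (\<Prod>a\<in>#S. \<phi> a)"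
      using add b by (intro add.IH) auto
    ultimately show ?case by (simp add: dvd_add dvd_mult)
  qed
  from this[OF S(1), of "{#}" 0] S(2) show ?thesis by simp
qed

section \<open>Olson's theorem\<close>

text \<open>
  The integral group ring \<open>\<int>[G]\<close> is \<open>'g \<Rightarrow>\<^sub>0 int\<close>, and \<open>gr_mon g\<close> is \<open>X\<^sup>g\<close>.
  Identities in \<open>\<bbbF>\<^sub>p[G]\<close> are stated as divisibility by \<open>of_nat p\<close> in \<open>\<int>[G]\<close>.
\<close>

abbreviation gr_mon :: "'g \<Rightarrow> 'g \<Rightarrow>\<^sub>0 int" where
  "gr_mon g \<equiv> Poly_Mapping.single g 1"

lemma gr_mon_add: "gr_mon (g + h) = gr_mon g * gr_mon (h::'g::monoid_add)"
  by (simp add: mult_single)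

lemma gr_mon_power: "gr_mon g ^ n = gr_mon (nsmul n (g::'g::monoid_add))"
  by (induction n) (simp_all add: gr_mon_add)

lemma one_minus_gr_mon_nsmul_add:
  fixes h k :: "'g::comm_monoid_add"
  shows "1 - gr_mon (nsmul j h + k) =
    (1 - gr_mon h) * (\<Sum>i<j. gr_mon h ^ i) + gr_mon (nsmul j h) * (1 - gr_mon k)"
proof -
  have "1 - gr_mon (nsmul j h) = (1 - gr_mon h) * (\<Sum>i<j. gr_mon h ^ i)"
    by (simp flip: gr_mon_power one_diff_power_eq)
  then show ?thesis by (simp add: gr_mon_add algebra_simps)
qed

lemma prime_dvd_one_minus_gr_mon_power_add_order:
  fixes h :: "'g::{ab_group_add,finite}"
  assumes p: "prime p" and oh: "add_order h = p ^ f"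
  shows "of_nat p dvd (1 - gr_mon h) ^ add_order h"
  using prime_dvd_diff_prime_power_sub[OF p, of 1 "gr_mon h" f]
  by (simp add: oh gr_mon_power flip: oh) (simp add: nsmul_add_order)

lemma lookup_of_nat_mult:
  fixes a :: "'g::monoid_add \<Rightarrow>\<^sub>0 'r::semiring_1"
  shows "Poly_Mapping.lookup (of_nat n * a) x = of_nat n * Poly_Mapping.lookup a x"
proof -
  have "of_nat n * a = Poly_Mapping.map ((*) (of_nat n)) a"
    by (simp add: mult_map_scale_conv_mult flip: single_of_nat)
  then show ?thesis by (simp add: Poly_Mapping.map.rep_eq when_def)
qed

lemma lookup_dvd_of_nat_dvd: "of_nat p dvd (a :: 'g::comm_monoid_add \<Rightarrow>\<^sub>0 int) \<Longrightarrow> int p dvd Poly_Mapping.lookup a x"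
  by (auto simp: lookup_of_nat_mult elim!: dvdE)

lemma dvd_prod_one_minus_gr_mon_set_plus:
  fixes h :: "'g::comm_monoid_add"
  assumes h: "d dvd (1 - gr_mon h) ^ q"
    and K: "\<And>T. set_mset T \<subseteq> K \<Longrightarrow> m \<le> size T \<Longrightarrow> d dvd (\<Prod>g\<in>#T. 1 - gr_mon g)"
    and S: "set_mset S \<subseteq> multiples h + K" "q + m \<le> size S + 1"
  shows "d dvd (\<Prod>g\<in>#S. 1 - gr_mon g)"
proof (rule dvd_prod_mset_of_decomposition[OF h K _ S])
  fix a assume "a \<in> multiples h + K"
  then obtain j k where "a = nsmul j h + k" "k \<in> K" by (auto simp: multiples_def elim!: set_plus_elim)
  then show "\<exists>c e k. k \<in> K \<and> 1 - gr_mon a = (1 - gr_mon h) * c + e * (1 - gr_mon k)"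
    using one_minus_gr_mon_nsmul_add[of j h k] by blast
qed

lemma zero_sumfree_add_replicate_mset:
  fixes h :: "'g::{ab_group_add,finite}"
  assumes K: "add_subgroup K" "multiples h \<inter> K = {0}" "h \<notin> K"
    and T: "set_mset T \<subseteq> K" "zero_sumfree T"
  shows "zero_sumfree (T + replicate_mset (add_order h - 1) h)"
  unfolding zero_sumfree_def
proof (intro allI impI notI)
  fix S assume "S \<subseteq># T + replicate_mset (add_order h - 1) h \<and> S \<noteq> {#}" and "sum_mset S = 0"
  then have S: "S \<subseteq># T + replicate_mset (add_order h - 1) h" "S \<noteq> {#}" by simp_all
  define c where "c = count S h"
  define S' where "S' = filter_mset (\<lambda>x. x \<noteq> h) S"
  have S_split: "S = S' + replicate_mset c h"
    unfolding S'_def c_def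
    using multiset_partition[of S "\<lambda>x. x \<noteq> h"] by (simp add: filter_eq_replicate_mset)
  have "h \<notin># T" using T(1) K(3) by blast
  then have "filter_mset (\<lambda>x. x \<noteq> h) (T + replicate_mset (add_order h - 1) h) = T"
    by (intro multiset_eqI) (simp add: not_in_iff)
  moreover have "S' \<subseteq># filter_mset (\<lambda>x. x \<noteq> h) (T + replicate_mset (add_order h - 1) h)"
    unfolding S'_def using S(1) by (rule multiset_filter_mono)
  ultimately have S'T: "S' \<subseteq># T" by simp
  have "c \<le> count (T + replicate_mset (add_order h - 1) h) h"
    unfolding c_def using S(1) by (rule mset_subset_eq_count)
  then have c: "c < add_order h" using \<open>h \<notin># T\<close> add_order_pos[of h] by (simp add: not_in_iff)
  have "sum_mset S' \<in> K" using T(1) S'T by (intro add_subgroup_sum_mset[OF K(1)]) (auto dest: set_mset_mono)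
  moreover have S'_sum: "sum_mset S' + nsmul c h = 0"
    using \<open>sum_mset S = 0\<close> by (simp add: S_split sum_mset_replicate_mset_nsmul)
  moreover have "nsmul c h = - sum_mset S'"
    using S'_sum by (metis add.commute eq_neg_iff_add_eq_0)
  ultimately have "nsmul c h \<in> K" using add_subgroup_minus[OF K(1)] by simp
  then have "nsmul c h = 0" using K(2) nsmul_in_multiples[of c h] by blast
  then have "add_order h dvd c" by (simp add: nsmul_eq_0_iff)
  then have "c = 0" using c by (metis dvd_imp_le leD neq0_conv)
  then have "S' \<noteq> {#}" "sum_mset S' = 0" using S S_split S'_sum by auto
  then show False using T(2) S'T unfolding zero_sumfree_def by blast
qed

lemma exists_maximal_add_order:
  fixes H :: "'g::{ab_group_add,finite} set"
  assumes p: "prime p" and G: "card (UNIV :: 'g set) = p ^ k" and "H \<noteq> {}"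
  obtains h f where "h \<in> H" "add_order h = p ^ f" "\<forall>z\<in>H. nsmul (p ^ f) z = 0"
proof -
  have "Max (add_order ` H) \<in> add_order ` H" using \<open>H \<noteq> {}\<close> by (intro Max_in) simp_all
  then obtain h where h: "h \<in> H" "add_order h = Max (add_order ` H)" by auto
  obtain f where f: "add_order h = p ^ f" using add_order_prime_power[OF p G] by blast
  have "nsmul (p ^ f) z = 0" if "z \<in> H" for z
  proof -
    obtain e where e: "add_order z = p ^ e" using add_order_prime_power[OF p G] by blast
    have "add_order z \<le> Max (add_order ` H)" using that by (intro Max_ge) simp_all
    then have "p ^ e \<le> p ^ f" using h(2) f e by simp
    then have "e \<le> f" by (rule power_le_imp_le_exp[OF prime_gt_1_nat[OF p]])
    then show ?thesis using le_imp_power_dvd[of e f p] by (simp add: nsmul_eq_0_iff e)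
  qed
  then show ?thesis using that h(1) f by blast
qed

lemma prod_mset_one_minus_gr_mon_zero:
  assumes "0 \<in># S"
  shows "(\<Prod>g\<in>#S. 1 - gr_mon g) = (0 :: 'g::comm_monoid_add \<Rightarrow>\<^sub>0 int)"
proof -
  obtain S' where "S = add_mset 0 S'" using assms by (metis multi_member_split)
  then show ?thesis by simp
qed

lemma olson_subgroup:
  fixes H :: "'g::{ab_group_add,finite} set"
  assumes p: "prime p" and G: "card (UNIV :: 'g set) = p ^ k" and "add_subgroup H"
  shows "\<exists>M\<ge>1. (\<forall>S. set_mset S \<subseteq> H \<longrightarrow> M \<le> size S \<longrightarrow> of_nat p dvd (\<Prod>g\<in>#S. 1 - gr_mon g))
           \<and> (\<exists>T. set_mset T \<subseteq> H \<and> size T = M - 1 \<and> zero_sumfree T)"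
  using assms(3)
proof (induction "card H" arbitrary: H rule: less_induct)
  case (less H)
  obtain h f where h: "h \<in> H" "add_order h = p ^ f" and exponent: "\<forall>z\<in>H. nsmul (p ^ f) z = 0"
    using exists_maximal_add_order[OF p G] add_subgroup_zero[OF less.prems] by blast
  show ?case
  proof (cases "h = 0")
    case True
    then have "f = 0" using h(2) add_order_eq_1_iff[of h] prime_gt_1_nat[OF p] by simp
    then have "H = {0}" using exponent add_subgroup_zero[OF less.prems] by auto
    have "of_nat p dvd (\<Prod>g\<in>#S. 1 - gr_mon g)" if "set_mset S \<subseteq> {0}" "1 \<le> size S" for S
    proof -
      have "S \<noteq> {#}" using that(2) by auto
      then have "0 \<in># S" using that(1) by (metis multiset_nonemptyE singletonD subsetD)
      then show ?thesis by (simp add: prod_mset_one_minus_gr_mon_zero)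
    qed
    moreover have "zero_sumfree ({#} :: 'g multiset)" by (simp add: zero_sumfree_def)
    ultimately show ?thesis using \<open>H = {0}\<close> by (intro exI[of _ 1]) auto
  next
    case False
    obtain K where K: "add_subgroup K" "K \<subseteq> H" "multiples h \<inter> K = {0}" "H \<subseteq> multiples h + K"
      using maximal_order_multiples_complement[OF p less.prems h exponent] by blast
    have "h \<notin> K" using K(3) False in_multiples_self[of h] by blast
    then have "card K < card H" using K(2) h(1) by (intro psubset_card_mono) auto
    then obtain MK TK where MK: "MK \<ge> 1"
      "\<And>S. set_mset S \<subseteq> K \<Longrightarrow> MK \<le> size S \<Longrightarrow> of_nat p dvd (\<Prod>g\<in>#S. 1 - gr_mon g)"
      and TK: "set_mset TK \<subseteq> K" "size TK = MK - 1" "zero_sumfree TK"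
      using less.hyps[OF _ K(1)] by blast
    define M where "M = MK + add_order h - 1"
    define T where "T = TK + replicate_mset (add_order h - 1) h"
    have "of_nat p dvd (\<Prod>g\<in>#S. 1 - gr_mon g)" if "set_mset S \<subseteq> H" "M \<le> size S" for S
      using dvd_prod_one_minus_gr_mon_set_plus[OF prime_dvd_one_minus_gr_mon_power_add_order[OF p h(2)] MK(2)]
        that K(4) add_order_pos[of h] unfolding M_def by auto
    moreover have "zero_sumfree T"
      unfolding T_def using zero_sumfree_add_replicate_mset[OF K(1,3) \<open>h \<notin> K\<close> TK(1,3)] .
    moreover have "set_mset T \<subseteq> H" using TK(1) K(2) h(1) by (auto simp: T_def)
    moreover have "size T = M - 1" using TK(2) MK(1) add_order_pos[of h] by (simp add: T_def M_def)
    moreover have "1 \<le> M" using MK(1) add_order_pos[of h] by (simp add: M_def)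
    ultimately show ?thesis by (intro exI[of _ M] conjI allI impI exI[of _ T]) simp_all
  qed
qed

definition signed_subsum_count :: "('i \<Rightarrow> 'g::comm_monoid_add) \<Rightarrow> 'i set \<Rightarrow> 'g \<Rightarrow> int" where
  "signed_subsum_count f A x = (\<Sum>T\<in>Pow A. (-1) ^ card T * of_bool (sum f T = x))"

lemma prod_gr_mon: "(\<Prod>a\<in>A. gr_mon (f a)) = gr_mon (sum f A :: 'g::comm_monoid_add)"
  by (induction A rule: infinite_finite_induct) (simp_all add: gr_mon_add)

lemma lookup_prod_one_minus_gr_mon:
  fixes f :: "'i \<Rightarrow> 'g::comm_monoid_add"
  assumes "finite A"
  shows "Poly_Mapping.lookup (\<Prod>a\<in>A. 1 - gr_mon (f a)) x = signed_subsum_count f A x"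
proof -
  have "(\<Prod>a\<in>A. 1 - gr_mon (f a)) = (\<Prod>a\<in>A. - gr_mon (f a) + 1)" by simp
  also have "\<dots> = (\<Sum>T\<in>Pow A. (\<Prod>a\<in>T. - gr_mon (f a)) * (\<Prod>a\<in>A - T. 1))"
    by (rule prod_add[OF assms])
  also have "\<dots> = (\<Sum>T\<in>Pow A. (-1) ^ card T * gr_mon (sum f T))"
    by (simp add: prod_uminus prod_gr_mon)
  moreover have "Poly_Mapping.lookup ((-1) ^ k * gr_mon g) x = (-1) ^ k * of_bool (g = x)" for k g
    by (cases "even k") (simp_all add: lookup_single when_def lookup_uminus)
  ultimately show ?thesis
    unfolding signed_subsum_count_def by (simp add: lookup_sum)
qed

lemma signed_subsum_count_zero_sumfree:
  assumes "finite A" and "\<And>T. T \<subseteq> A \<Longrightarrow> T \<noteq> {} \<Longrightarrow> sum f T \<noteq> 0"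
  shows "signed_subsum_count f A 0 = 1"
proof -
  have "signed_subsum_count f A 0 = (\<Sum>T\<in>Pow A. of_bool (T = {}))"
    unfolding signed_subsum_count_def by (rule sum.cong) (use assms(2) in auto)
  then show ?thesis using assms(1) by simp
qed

lemma image_mset_nth_subseteq:
  assumes "T \<subseteq> {..<length xs}"
  shows "image_mset (nth xs) (mset_set T) \<subseteq># mset xs"
proof -
  have "mset xs = mset (map (nth xs) [0..<length xs])" by (simp add: map_nth)
  also have "\<dots> = image_mset (nth xs) (mset_set {..<length xs})" by (simp add: lessThan_atLeast0)
  also have "mset_set {..<length xs} = mset_set T + mset_set ({..<length xs} - T)"
    using assms finite_subset[OF assms]
    by (subst mset_set_Union[symmetric]) (auto simp: Un_absorb1)
  finally show ?thesis by simp
qed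

lemma davenport_eqI:
  assumes "0 < M"
    and "\<And>S :: 'g::{ab_group_add,finite} multiset. M \<le> size S \<Longrightarrow>
           \<exists>S'. S' \<subseteq># S \<and> S' \<noteq> {#} \<and> sum_mset S' = 0"
    and "zero_sumfree (T :: 'g multiset)" "size T = M - 1"
  shows "davenport TYPE('g) = M"
  unfolding davenport_def
proof (rule Least_equality)
  fix t assume t: "0 < t \<and> (\<forall>S :: 'g multiset. t \<le> size S \<longrightarrow> (\<exists>S'. S' \<subseteq># S \<and> S' \<noteq> {#} \<and> sum_mset S' = 0))"
  show "M \<le> t"
  proof (rule ccontr)
    assume "\<not> M \<le> t"
    then have "t \<le> size T" using assms(4) by simp
    then show False using t assms(3) unfolding zero_sumfree_def by blast
  qed
qed (use assms(1,2) in blast)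

theorem prime_dvd_signed_subsum_count:
  fixes f :: "'i \<Rightarrow> 'g::{ab_group_add,finite}"
  assumes p: "prime p" and G: "card (UNIV :: 'g set) = p ^ k"
    and A: "finite A" "davenport TYPE('g) \<le> card A"
  shows "int p dvd signed_subsum_count f A x"
proof -
  obtain M T where M: "M \<ge> 1"
    "\<And>S. M \<le> size S \<Longrightarrow> of_nat p dvd (\<Prod>g\<in>#S. 1 - gr_mon (g::'g))"
    and T: "zero_sumfree (T::'g multiset)" "size T = M - 1"
    using olson_subgroup[OF p G, of UNIV] by (auto simp: add_subgroup_def)
  have dvd: "int p dvd signed_subsum_count f A x"
    if "finite A" "M \<le> card A" for A and f :: "'j \<Rightarrow> 'g" and x
  proof -
    have "(\<Prod>a\<in>A. 1 - gr_mon (f a)) = (\<Prod>g\<in>#image_mset f (mset_set A). 1 - gr_mon g)"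
      by (simp add: prod_unfold_prod_mset image_mset.compositionality comp_def)
    then have "of_nat p dvd (\<Prod>a\<in>A. 1 - gr_mon (f a))" using M(2) that(2) by simp
    then show ?thesis using lookup_dvd_of_nat_dvd lookup_prod_one_minus_gr_mon[OF that(1)] by metis
  qed
  have "\<exists>S'. S' \<subseteq># S \<and> S' \<noteq> {#} \<and> sum_mset S' = 0" if "M \<le> size S" for S :: "'g multiset"
  proof (rule ccontr)
    assume no_zero_sum: "\<nexists>S'. S' \<subseteq># S \<and> S' \<noteq> {#} \<and> sum_mset S' = 0"
    obtain xs where xs: "mset xs = S" using ex_mset by blast
    have "sum (nth xs) I \<noteq> 0" if "I \<subseteq> {..<length xs}" "I \<noteq> {}" for I
      using no_zero_sum image_mset_nth_subseteq[OF that(1)] that finite_subset[OF that(1)]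
      by (auto simp: xs sum_unfold_sum_mset mset_set_empty_iff)
    then have "signed_subsum_count (nth xs) {..<length xs} 0 = 1"
      by (intro signed_subsum_count_zero_sumfree) auto
    moreover have "int p dvd signed_subsum_count (nth xs) {..<length xs} 0"
      using that xs by (intro dvd) auto
    ultimately show False using p by (simp add: prime_gt_1_nat)
  qed
  then have "davenport TYPE('g) = M" using davenport_eqI[OF _ _ T] M(1) by simp
  then show ?thesis using dvd A by simp
qed

section \<open>Long zero-sum subfamilies\<close>

lemma sum_supersets_zero_sum:
  fixes f :: "'i \<Rightarrow> 'g::ab_group_add"
  assumes I: "finite I" and J: "J \<subseteq> I"
  shows "(\<Sum>T\<in>Pow I. (-1) ^ card T * of_bool (J \<subseteq> T \<and> sum f T = 0))
       = (-1) ^ card J * signed_subsum_count f (I - J) (- sum f J)"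
proof -
  have fin: "finite J" "finite (I - J)" using I J finite_subset by auto
  have "(-1) ^ card J * signed_subsum_count f (I - J) (- sum f J)
      = (\<Sum>T'\<in>Pow (I - J). (-1) ^ card (J \<union> T') * of_bool (sum f (J \<union> T') = 0))"
  proof -
    have "(-1) ^ card (J \<union> T') * of_bool (sum f (J \<union> T') = 0)
        = (-1::int) ^ card J * ((-1) ^ card T' * of_bool (sum f T' = - sum f J))" if "T' \<in> Pow (I - J)" for T'
    proof -
      have "finite T'" "J \<inter> T' = {}" using that fin by (auto intro: finite_subset)
      then have "card (J \<union> T') = card J + card T'" "sum f (J \<union> T') = sum f J + sum f T'"
        using fin by (simp_all add: card_Un_disjoint sum.union_disjoint)
      then show ?thesis by (simp add: eq_neg_iff_add_eq_0 add.commute flip: power_add)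
    qed
    then show ?thesis unfolding signed_subsum_count_def sum_distrib_left by (rule sum.cong[OF refl, symmetric])
  qed
  also have "\<dots> = (\<Sum>T\<in>{T \<in> Pow I. J \<subseteq> T}. (-1) ^ card T * of_bool (sum f T = 0))"
  proof (rule sum.reindex_bij_witness[of _ "\<lambda>T. T - J" "\<lambda>T'. J \<union> T'"])
    fix T assume "T \<in> {T \<in> Pow I. J \<subseteq> T}"
    then show "J \<union> (T - J) = T" "T - J \<in> Pow (I - J)" by auto
  qed (use J in auto)
  also have "\<dots> = (\<Sum>T\<in>Pow I. (-1) ^ card T * of_bool (J \<subseteq> T \<and> sum f T = 0))"
    using I by (simp add: sum.inter_filter) (intro sum.cong; auto)
  finally show ?thesis ..
qed

lemma sum_alternating_interval:
  assumes "finite T" "E \<subseteq> T"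
  shows "(\<Sum>J\<in>Pow T. of_bool (E \<subseteq> J) * (-1) ^ card J) = of_bool (T = E) * ((-1) ^ card E :: int)"
proof -
  have "(\<Sum>J\<in>Pow T. of_bool (E \<subseteq> J) * (-1::int) ^ card J) = (\<Sum>J | J \<subseteq> T \<and> E \<subseteq> J. (-1) ^ card J)"
    using assms(1) by (simp add: sum.inter_filter[symmetric] Pow_def) (intro sum.cong; auto)
  also have "\<dots> = of_bool (T = E) * (-1) ^ card E"
  proof (cases "T = E")
    case True
    then have "{J. J \<subseteq> T \<and> E \<subseteq> J} = {E}" by auto
    then show ?thesis using True by simp
  next
    case False
    then have "E \<subset> T" using assms(2) by blast
    have "card {J \<in> {J. J \<subseteq> T \<and> E \<subseteq> J}. even (card J)}
        = card {J \<in> {J. J \<subseteq> T \<and> E \<subseteq> J}. odd (card J)}"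
      using card_subsupersets_even_odd[OF assms(1) \<open>E \<subset> T\<close>] by (simp add: conj_assoc)
    then have "(\<Sum>J | J \<subseteq> T \<and> E \<subseteq> J. (-1::int) ^ card J) = 0"
      using assms(1) by (intro sum_alternating_cancels) simp_all
    then show ?thesis using False by simp
  qed
  finally show ?thesis .
qed

lemma sum_alternating_interval_truncated:
  assumes T: "finite T" "E \<subseteq> T" "card T \<le> m" and E: "card E < m"
  shows "(\<Sum>J\<in>Pow T. of_bool (E \<subseteq> J \<and> card J < m) * (-1) ^ card J)
       = of_bool (T = E) * (-1) ^ card E - of_bool (card T = m) * ((-1) ^ m :: int)"
proof (cases "card T = m")
  case True
  have "of_bool (E \<subseteq> J \<and> card J < m) = of_bool (E \<subseteq> J) - (of_bool (J = T) :: int)" if "J \<subseteq> T" for J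
    using T True E that psubset_card_mono[OF T(1), of J] by auto
  then have "(\<Sum>J\<in>Pow T. of_bool (E \<subseteq> J \<and> card J < m) * (-1) ^ card J)
      = (\<Sum>J\<in>Pow T. of_bool (E \<subseteq> J) * (-1::int) ^ card J) - (\<Sum>J\<in>Pow T. of_bool (J = T) * (-1) ^ card J)"
    by (simp add: left_diff_distrib sum_subtractf)
  also have "(\<Sum>J\<in>Pow T. of_bool (J = T) * (-1::int) ^ card J) = (\<Sum>J\<in>Pow T. if J = T then (-1) ^ m else 0)"
    using True by (intro sum.cong) auto
  finally show ?thesis using True T(1) by (simp add: sum_alternating_interval[OF T(1,2)])
next
  case False
  then have "card J < m" if "J \<subseteq> T" for J using T card_mono[OF T(1) that] by simp
  then have "(\<Sum>J\<in>Pow T. of_bool (E \<subseteq> J \<and> card J < m) * (-1::int) ^ card J)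
      = (\<Sum>J\<in>Pow T. of_bool (E \<subseteq> J) * (-1) ^ card J)"
    by (intro sum.cong) auto
  then show ?thesis using False sum_alternating_interval[OF T(1,2)] by simp
qed

lemma sum_Pow_restrict:
  assumes "finite I" "T \<subseteq> I"
  shows "(\<Sum>J\<in>Pow I. of_bool (J \<subseteq> T) * g J) = (\<Sum>J\<in>Pow T. g J :: 'a::comm_semiring_1)"
proof -
  have "(\<Sum>J\<in>Pow I. of_bool (J \<subseteq> T) * g J) = (\<Sum>J\<in>Pow I. if J \<subseteq> T then g J else 0)"
    by (intro sum.cong) auto
  also have "\<dots> = (\<Sum>J\<in>{J \<in> Pow I. J \<subseteq> T}. g J)"
    using assms(1) by (intro sum.inter_filter[symmetric]) simp
  also have "{J \<in> Pow I. J \<subseteq> T} = Pow T" using assms(2) by auto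
  finally show ?thesis .
qed

lemma alternating_sum_zero_sum_supersets:
  fixes f :: "'i \<Rightarrow> 'g::ab_group_add"
  assumes I: "finite I" and short: "\<And>T. T \<subseteq> I \<Longrightarrow> sum f T = 0 \<Longrightarrow> card T \<le> m"
    and E: "E \<subseteq> I" "card E < m"
  shows "(\<Sum>J\<in>Pow I. of_bool (E \<subseteq> J \<and> card J < m) * (-1) ^ card J *
            (\<Sum>T\<in>Pow I. (-1) ^ card T * of_bool (J \<subseteq> T \<and> sum f T = 0)))
       = of_bool (sum f E = 0) - (\<Sum>T\<in>Pow I. of_bool (E \<subseteq> T \<and> card T = m \<and> sum f T = 0) :: int)"
proof -
  have inner: "(\<Sum>J\<in>Pow I. of_bool (E \<subseteq> J \<and> card J < m) * (-1::int) ^ card J *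
        ((-1) ^ card T * of_bool (J \<subseteq> T \<and> sum f T = 0)))
      = of_bool (T = E \<and> sum f E = 0) - (of_bool (E \<subseteq> T \<and> card T = m \<and> sum f T = 0) :: int)"
    if T: "T \<subseteq> I" for T
  proof (cases "sum f T = 0")
    case False
    then show ?thesis by auto
  next
    case True
    have fin: "finite T" using I T finite_subset by blast
    have "(\<Sum>J\<in>Pow I. of_bool (E \<subseteq> J \<and> card J < m) * (-1) ^ card J *
          ((-1) ^ card T * of_bool (J \<subseteq> T \<and> sum f T = 0)))
        = (-1) ^ card T * (\<Sum>J\<in>Pow I. of_bool (J \<subseteq> T) * (of_bool (E \<subseteq> J \<and> card J < m) * (-1::int) ^ card J))"
      using True by (simp add: sum_distrib_left mult_ac)
    also have "\<dots> = (-1) ^ card T * (\<Sum>J\<in>Pow T. of_bool (E \<subseteq> J \<and> card J < m) * (-1) ^ card J)"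
      using sum_Pow_restrict[OF I T] by simp
    also have "\<dots> = of_bool (T = E \<and> sum f E = 0) - of_bool (E \<subseteq> T \<and> card T = m \<and> sum f T = 0)"
    proof (cases "E \<subseteq> T")
      case True
      with sum_alternating_interval_truncated[OF fin True short[OF T \<open>sum f T = 0\<close>] E(2)]
      show ?thesis using \<open>sum f T = 0\<close> by (auto simp flip: power_add)
    next
      case False
      then have "(\<Sum>J\<in>Pow T. of_bool (E \<subseteq> J \<and> card J < m) * (-1::int) ^ card J) = 0"
        by (intro sum.neutral) auto
      then show ?thesis using False by auto
    qed
    finally show ?thesis .
  qed
  have "(\<Sum>J\<in>Pow I. of_bool (E \<subseteq> J \<and> card J < m) * (-1::int) ^ card J *
          (\<Sum>T\<in>Pow I. (-1) ^ card T * of_bool (J \<subseteq> T \<and> sum f T = 0)))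
      = (\<Sum>J\<in>Pow I. \<Sum>T\<in>Pow I. of_bool (E \<subseteq> J \<and> card J < m) * (-1) ^ card J *
          ((-1) ^ card T * of_bool (J \<subseteq> T \<and> sum f T = 0)))"
    by (rule sum.cong[OF refl]) (rule sum_distrib_left)
  also have "\<dots> = (\<Sum>T\<in>Pow I. \<Sum>J\<in>Pow I. of_bool (E \<subseteq> J \<and> card J < m) * (-1) ^ card J *
          ((-1) ^ card T * of_bool (J \<subseteq> T \<and> sum f T = 0)))"
    by (rule sum.swap)
  also have "\<dots> = (\<Sum>T\<in>Pow I. of_bool (T = E \<and> sum f E = 0) - of_bool (E \<subseteq> T \<and> card T = m \<and> sum f T = 0))"
    using inner by (intro sum.cong) auto
  also have "\<dots> = of_bool (sum f E = 0) - (\<Sum>T\<in>Pow I. of_bool (E \<subseteq> T \<and> card T = m \<and> sum f T = 0))"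
  proof -
    have "(\<Sum>T\<in>Pow I. of_bool (T = E \<and> sum f E = 0) :: int) = of_bool (sum f E = 0)"
      using I E(1) by (cases "sum f E = 0") (simp_all add: of_bool_def sum.delta)
    then show ?thesis by (simp add: sum_subtractf)
  qed
  finally show ?thesis .
qed

lemma sum_singleton_supersets:
  assumes I: "finite I"
  shows "(\<Sum>e\<in>I. \<Sum>T\<in>Pow I. of_bool ({e} \<subseteq> T \<and> P T))
       = (\<Sum>T\<in>Pow I. of_nat (card T) * (of_bool (P T) :: 'a::comm_semiring_1))"
proof -
  have "(\<Sum>e\<in>I. \<Sum>T\<in>Pow I. of_bool ({e} \<subseteq> T \<and> P T))
      = (\<Sum>T\<in>Pow I. \<Sum>e\<in>I. of_bool (e \<in> T) * (of_bool (P T) :: 'a))"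
    by (subst sum.swap) (simp add: of_bool_conj)
  also have "\<dots> = (\<Sum>T\<in>Pow I. of_nat (card T) * of_bool (P T))"
  proof (rule sum.cong[OF refl])
    fix T assume "T \<in> Pow I"
    then have "I \<inter> {e. e \<in> T} = T" by auto
    then show "(\<Sum>e\<in>I. of_bool (e \<in> T) * of_bool (P T)) = of_nat (card T) * (of_bool (P T) :: 'a)"
      using I by (simp flip: sum_distrib_right)
  qed
  finally show ?thesis .
qed

lemma exists_long_zero_sum_subset:
  fixes f :: "'i \<Rightarrow> 'g::ab_group_add"
  assumes p: "prime p" and I: "finite I" and m: "0 < m" "m < p"
    and nonzero: "\<And>e. e \<in> I \<Longrightarrow> f e \<noteq> 0"
    and signed: "\<And>A x. A \<subseteq> I \<Longrightarrow> card I < card A + m \<Longrightarrow> int p dvd signed_subsum_count f A x"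
  shows "\<exists>T\<subseteq>I. sum f T = 0 \<and> m < card T"
proof (rule ccontr)
  assume "\<not> (\<exists>T\<subseteq>I. sum f T = 0 \<and> m < card T)"
  then have short: "\<And>T. T \<subseteq> I \<Longrightarrow> sum f T = 0 \<Longrightarrow> card T \<le> m" by (meson not_le)
  define N where "N E = (\<Sum>T\<in>Pow I. of_bool (E \<subseteq> T \<and> card T = m \<and> sum f T = 0) :: int)" for E
  have supersets: "int p dvd (\<Sum>T\<in>Pow I. (-1) ^ card T * of_bool (J \<subseteq> T \<and> sum f T = 0))"
    if J: "J \<subseteq> I" "card J < m" for J
  proof -
    have "card (I - J) = card I - card J" using I J by (simp add: card_Diff_subset finite_subset)
    moreover have "card J \<le> card I" using I J by (simp add: card_mono)
    ultimately have "int p dvd signed_subsum_count f (I - J) (- sum f J)"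
      using J by (intro signed) auto
    then show ?thesis by (simp add: sum_supersets_zero_sum[OF I J(1)])
  qed
  have congruence: "int p dvd of_bool (sum f E = 0) - N E" if E: "E \<subseteq> I" "card E < m" for E
  proof -
    have "int p dvd (\<Sum>J\<in>Pow I. of_bool (E \<subseteq> J \<and> card J < m) * (-1) ^ card J *
            (\<Sum>T\<in>Pow I. (-1) ^ card T * of_bool (J \<subseteq> T \<and> sum f T = 0)))"
      using supersets by (intro dvd_sum) (auto intro: dvd_mult)
    then show ?thesis by (simp only: alternating_sum_zero_sum_supersets[OF I short E] N_def)
  qed
  have not_dvd_N0: "\<not> int p dvd N {}"
  proof
    assume "int p dvd N {}"
    moreover have "int p dvd 1 - N {}" using congruence[of "{}"] m(1) by simp
    ultimately have "int p dvd (1 - N {}) + N {}" by (rule dvd_add[rotated])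
    then show False using p by (simp add: prime_gt_1_nat)
  qed
  show False
  proof (cases "m = 1")
    case True
    have "N {} = 0" unfolding N_def
    proof (intro sum.neutral ballI)
      fix T assume "T \<in> Pow I"
      show "of_bool ({} \<subseteq> T \<and> card T = m \<and> sum f T = 0) = (0::int)"
        using nonzero \<open>T \<in> Pow I\<close> True by (auto simp: card_1_singleton_iff)
    qed
    then show False using not_dvd_N0 by simp
  next
    case False
    have "int p dvd N {e}" if "e \<in> I" for e
      using congruence[of "{e}"] that nonzero False m(1) by simp
    then have "int p dvd (\<Sum>e\<in>I. N {e})" by (intro dvd_sum)
    also have "(\<Sum>e\<in>I. N {e}) = int m * N {}"
      unfolding N_def sum_singleton_supersets[OF I] sum_distrib_left by (intro sum.cong) auto
    finally have "int p dvd int m" using not_dvd_N0 p by (simp add: prime_dvd_mult_iff)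
    then show False using m by (auto dest: dvd_imp_le)
  qed
qed

lemma exists_long_zero_sum_subseq:
  fixes R :: "'g::{ab_group_add,finite} multiset"
  assumes p: "prime p" and G: "card (UNIV :: 'g set) = p ^ k"
    and R: "0 \<notin># R" "size R = davenport TYPE('g) + m - 1" and m: "0 < m" "m < p"
  shows "\<exists>S'. S' \<subseteq># R \<and> sum_mset S' = 0 \<and> m < size S'"
proof -
  obtain rs where rs: "mset rs = R" using ex_mset by blast
  then have len: "card {..<length rs} = davenport TYPE('g) + m - 1" using R(2) by auto
  have "int p dvd signed_subsum_count (nth rs) A x"
    if "A \<subseteq> {..<length rs}" "card {..<length rs} < card A + m" for A x
  proof (rule prime_dvd_signed_subsum_count[OF p G])
    show "finite A" using that(1) finite_subset by blast
    show "davenport TYPE('g) \<le> card A" using that(2) len m(1) by linarith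
  qed
  moreover have "nth rs e \<noteq> 0" if "e \<in> {..<length rs}" for e
  proof -
    have "nth rs e \<in># R" using that nth_mem[of e rs] by (simp add: rs[symmetric])
    then show ?thesis using R(1) by metis
  qed
  ultimately obtain T where T: "T \<subseteq> {..<length rs}" "sum (nth rs) T = 0" "m < card T"
    using exists_long_zero_sum_subset[OF p _ m, of "{..<length rs}" "nth rs"] by blast
  have "image_mset (nth rs) (mset_set T) \<subseteq># R" using image_mset_nth_subseteq[OF T(1)] rs by simp
  moreover have "sum_mset (image_mset (nth rs) (mset_set T)) = 0" using T(2) by (simp add: sum_unfold_sum_mset)
  ultimately show ?thesis using T(3) by (intro exI[of _ "image_mset (nth rs) (mset_set T)"]) simp
qed

lemma replicate_count_add_filter_mset: "S = replicate_mset (count S x) x + filter_mset (\<lambda>y. y \<noteq> x) S"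
  using multiset_partition[of S "\<lambda>y. y = x"] by (simp add: filter_eq_replicate_mset)

lemma le_count_zero_if_zero_sums_short:
  fixes S :: "'g::{ab_group_add,finite} multiset"
  assumes p: "prime p" and G: "card (UNIV :: 'g set) = p ^ k"
    and short: "\<And>S'. S' \<subseteq># S \<Longrightarrow> sum_mset S' = 0 \<Longrightarrow> size S' \<le> i"
    and S: "size S = davenport TYPE('g) + i - 1" and "i < p"
  shows "i \<le> count S 0"
proof (rule ccontr)
  assume "\<not> i \<le> count S 0"
  define R where "R = filter_mset (\<lambda>x. x \<noteq> 0) S"
  have split: "S = replicate_mset (count S 0) 0 + R"
    unfolding R_def by (rule replicate_count_add_filter_mset)
  have "0 \<notin># R" by (simp add: R_def)
  moreover have "size R = davenport TYPE('g) + (i - count S 0) - 1"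
    using S \<open>\<not> i \<le> count S 0\<close> arg_cong[OF split, of size] by simp
  moreover have "0 < i - count S 0" "i - count S 0 < p" using \<open>\<not> i \<le> count S 0\<close> \<open>i < p\<close> by simp_all
  ultimately obtain S' where S': "S' \<subseteq># R" "sum_mset S' = 0" "i - count S 0 < size S'"
    using exists_long_zero_sum_subseq[OF p G] by blast
  have "replicate_mset (count S 0) 0 + S' \<subseteq># S" using S'(1) by (subst split) (rule subset_mset.add_left_mono)
  then have "size (replicate_mset (count S 0) 0 + S') \<le> i"
    using S'(2) by (intro short) (simp_all add: sum_mset_replicate_mset_nsmul)
  then show False using S'(3) by simp
qed

lemma zero_sumfree_if_zero_sums_short:
  assumes "\<And>S'. S' \<subseteq># replicate_mset i 0 + T \<Longrightarrow> sum_mset S' = 0 \<Longrightarrow> size S' \<le> i"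
  shows "zero_sumfree (T :: 'g::comm_monoid_add multiset)"
  unfolding zero_sumfree_def
proof (intro allI impI notI)
  fix S' assume S': "S' \<subseteq># T \<and> S' \<noteq> {#}" and "sum_mset S' = 0"
  then have "size (replicate_mset i 0 + S') \<le> i"
    by (intro assms) (simp_all add: subset_mset.add_left_mono sum_mset_replicate_mset_nsmul)
  then show False using S' by (simp add: nonempty_has_size)
qed

theorem theorem2p1:
  fixes p :: nat and S :: "'g::{ab_group_add,finite} multiset" and i :: nat
  assumes "prime p"
    and "\<exists>k. card (UNIV :: 'g set) = p ^ k"
    and "normal_seq S"
    and "size S = davenport TYPE('g) + i - 1"
    and "1 \<le> i" and "i \<le> p - 1"
  shows "\<exists>T. S = replicate_mset i 0 + T \<and> zero_sumfree T"
proof -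
  obtain k where G: "card (UNIV :: 'g set) = p ^ k" using assms(2) by blast
  have short: "size S' \<le> i" if "S' \<subseteq># S" "sum_mset S' = 0" for S'
    using assms(3-5) that unfolding normal_seq_def zero_sum_def by force
  have "count S 0 \<le> i"
    using short[of "replicate_mset (count S 0) 0"]
    by (simp add: count_le_replicate_mset_subset_eq[symmetric] sum_mset_replicate_mset_nsmul)
  moreover have "i \<le> count S 0"
    using le_count_zero_if_zero_sums_short[OF assms(1) G short assms(4)] assms(6)
      prime_gt_0_nat[OF assms(1)] by simp
  ultimately have S: "S = replicate_mset i 0 + filter_mset (\<lambda>x. x \<noteq> 0) S"
    using replicate_count_add_filter_mset[of S 0] by simp
  moreover have "zero_sumfree (filter_mset (\<lambda>x. x \<noteq> 0) S)"
    using short by (intro zero_sumfree_if_zero_sums_short[of i]) (simp flip: S)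
  ultimately show ?thesis by blast
qed

end
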